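(* Let $A$ be an $n\times n$ $(0,1)$-matrix, and let $\Phi$ be a depth-$2$ circuit with $L$ wires computing the linear operator $f_A(\vec x)=A\vec x$ over $GF(2)$. Suppose every output node of $\Phi$ computes a linear boolean function. Then there is a depth-$2$ circuit $\Phi'$ that computes $f_A$, has at most $L+2n$ wires, and in which every non-input node computes a linear boolean function.
   Context: A depth-$2$ circuit has $n$ input nodes $x_1,\dots,x_n$, a set of middle nodes, and $n$ output nodes $y_1,\dots,y_n$. Wires go only from inputs to middle nodes, from middle nodes to outputs, or from inputs directly to outputs. Each non-input node may compute an arbitrary boolean function of the values at its in-neighbours, with no restriction on fanin or fanout. The circuit computes $f=(f_1,\dots,f_n)$ if the function at $y_i$ equals $f_i$ for all $i$. A boolean function is linear if it is the sum modulo $2$ of some subset of its arguments (the empty sum is allowed) or the negation of such a sum. The number of wires is the number of edges of the circuit. *)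

theory Defs
  imports Main
begin

text \<open>Depth-2 circuits on n inputs (indices 0..n-1), middle nodes 0..mid-1, outputs 0..n-1.
  Each node's gate is applied to the assignment restricted to its in-neighbours,
  so it can depend only on the values at its in-neighbours.\<close>

record circuit =
  mid  :: nat
  inM  :: "nat \<Rightarrow> nat set"
  gM   :: "nat \<Rightarrow> (nat \<Rightarrow> bool) \<Rightarrow> bool"
  inO  :: "nat \<Rightarrow> nat set"
  midO :: "nat \<Rightarrow> nat set"
  gO   :: "nat \<Rightarrow> (nat \<Rightarrow> bool) \<Rightarrow> (nat \<Rightarrow> bool) \<Rightarrow> bool"

definition restr :: "(nat \<Rightarrow> bool) \<Rightarrow> nat set \<Rightarrow> nat \<Rightarrow> bool" where
  "restr x S = (\<lambda>i. if i \<in> S then x i else False)"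

definition wf_circuit :: "nat \<Rightarrow> circuit \<Rightarrow> bool" where
  "wf_circuit n C \<longleftrightarrow>
     (\<forall>j<mid C. inM C j \<subseteq> {..<n}) \<and>
     (\<forall>i<n. inO C i \<subseteq> {..<n} \<and> midO C i \<subseteq> {..<mid C})"

definition mval :: "circuit \<Rightarrow> (nat \<Rightarrow> bool) \<Rightarrow> nat \<Rightarrow> bool" where
  "mval C x j = gM C j (restr x (inM C j))"

definition outval :: "circuit \<Rightarrow> (nat \<Rightarrow> bool) \<Rightarrow> nat \<Rightarrow> bool" where
  "outval C x i = gO C i (restr x (inO C i)) (restr (mval C x) (midO C i))"

definition wires :: "nat \<Rightarrow> circuit \<Rightarrow> nat" where
  "wires n C = (\<Sum>j<mid C. card (inM C j)) + (\<Sum>i<n. card (inO C i) + card (midO C i))"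

definition par :: "nat set \<Rightarrow> (nat \<Rightarrow> bool) \<Rightarrow> bool" where
  "par T v = odd (card {i\<in>T. v i})"

text \<open>Linear operator x \<mapsto> A x over GF(2); A is an n\<times>n (0,1)-matrix given by its entries A i j, i,j < n.\<close>
definition linop :: "nat \<Rightarrow> (nat \<Rightarrow> nat \<Rightarrow> bool) \<Rightarrow> (nat \<Rightarrow> bool) \<Rightarrow> nat \<Rightarrow> bool" where
  "linop n A x i = par {j\<in>{..<n}. A i j} x"

definition computes :: "nat \<Rightarrow> (nat \<Rightarrow> nat \<Rightarrow> bool) \<Rightarrow> circuit \<Rightarrow> bool" where
  "computes n A C \<longleftrightarrow> (\<forall>x. \<forall>i<n. outval C x i = linop n A x i)"

definition linear_mid :: "circuit \<Rightarrow> nat \<Rightarrow> bool" where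
  "linear_mid C j \<longleftrightarrow> (\<exists>T\<subseteq>inM C j. \<exists>c. \<forall>v.
      gM C j (restr v (inM C j)) = (c \<noteq> par T v))"

definition linear_out :: "circuit \<Rightarrow> nat \<Rightarrow> bool" where
  "linear_out C i \<longleftrightarrow> (\<exists>T1\<subseteq>inO C i. \<exists>T2\<subseteq>midO C i. \<exists>c. \<forall>v w.
      gO C i (restr v (inO C i)) (restr w (midO C i)) = (c \<noteq> (par T1 v \<noteq> par T2 w)))"

end

theory Submission
  imports Defs "HOL-Library.Z2"
begin

(* For a boolean function f of n arguments let lin_part n f be its "linear part at 0":
   the GF(2)-linear map x \<mapsto> \<Sum>k<n. x_k (f e_k + f 0).  This operation is additive in f, and for
   an affine f it recovers f up to the constant f 0.

   Given the circuit \<Phi>, keep all wires and replace every middle gate m_j by the parity of its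
   linear part (a linear gate reading only inputs of m_j).  Fix an output i with linear gate
   c + par T1 x + par T2 (m x).  Since the output computes A x, the parity of the middle values
   in T2 is an affine function of x; by additivity of lin_part the new middle values have parity
   equal to this affine function minus its value at 0.  Absorbing that constant into the output
   gate gives a circuit computing A x with the same wires, all of whose gates are linear; in
   particular it has at most L + 2n wires. *)

abbreviation B :: "bool \<Rightarrow> bit" where "B \<equiv> of_bool"

lemma B_xor: "B (p \<noteq> q) = B p + B q"
  by (cases p; cases q) auto

lemma bit_add_cancel: "(c::bit) + s + c = s"
  by (cases c; cases s) auto

lemma B_inj: "B p = B q \<longleftrightarrow> p = q"
  by (cases p; cases q) auto

lemma B_par: "finite T \<Longrightarrow> B (par T v) = (\<Sum>i\<in>T. B (v i))"
proof (induction T rule: finite_induct)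
  case empty
  then show ?case by (simp add: par_def)
next
  case (insert a T)
  have "{i\<in>insert a T. v i} = (if v a then insert a {i\<in>T. v i} else {i\<in>T. v i})" by auto
  moreover have "finite {i\<in>T. v i}" using insert by auto
  ultimately show ?case using insert by (auto simp: par_def B_xor)
qed

lemma par_restr:
  assumes "T \<subseteq> S"
  shows "par T (restr v S) = par T v"
proof -
  have "{i\<in>T. restr v S i} = {i\<in>T. v i}" using assms by (auto simp: restr_def)
  then show ?thesis by (simp add: par_def)
qed

lemma sum_subset_as_linear_form:
  fixes x :: "nat \<Rightarrow> bool"
  assumes "T \<subseteq> {..<n}"
  shows "(\<Sum>k\<in>T. B (x k)) = (\<Sum>k<n. B (x k) * B (k \<in> T))"
proof -
  have "(\<Sum>k<n. B (x k) * B (k \<in> T)) = (\<Sum>k\<in>T. B (x k) * B (k \<in> T))"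
    by (rule sum.mono_neutral_right) (use assms in auto)
  also have "\<dots> = (\<Sum>k\<in>T. B (x k))"
    by (rule sum.cong) auto
  finally show ?thesis by simp
qed

definition unit_vec :: "nat \<Rightarrow> nat \<Rightarrow> bool" where
  "unit_vec k = (\<lambda>i. i = k)"

definition zero_vec :: "nat \<Rightarrow> bool" where
  "zero_vec = (\<lambda>_. False)"

definition lin_part :: "nat \<Rightarrow> ((nat \<Rightarrow> bool) \<Rightarrow> bit) \<Rightarrow> (nat \<Rightarrow> bool) \<Rightarrow> bit" where
  "lin_part n f x = (\<Sum>k<n. B (x k) * (f (unit_vec k) + f zero_vec))"

lemma lin_part_sum:
  "lin_part n (\<lambda>y. \<Sum>j\<in>J. f j y) x = (\<Sum>j\<in>J. lin_part n (f j) x)"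
proof -
  have "lin_part n (\<lambda>y. \<Sum>j\<in>J. f j y) x
      = (\<Sum>k<n. \<Sum>j\<in>J. B (x k) * (f j (unit_vec k) + f j zero_vec))"
    unfolding lin_part_def by (simp only: sum.distrib distrib_left sum_distrib_left)
  also have "\<dots> = (\<Sum>j\<in>J. lin_part n (f j) x)"
    unfolding lin_part_def by (rule sum.swap)
  finally show ?thesis .
qed

lemma lin_part_affine:
  assumes aff: "\<And>y. f y = c + (\<Sum>k<n. B (y k) * a k)"
  shows "lin_part n f x = f x + f zero_vec"
proof -
  have f0: "f zero_vec = c" using aff[of zero_vec] by (simp add: zero_vec_def)
  have fe: "f (unit_vec k) = c + a k" if "k < n" for k
  proof -
    have "(\<Sum>k'<n. B (unit_vec k k') * a k') = (\<Sum>k'<n. if k' = k then a k else 0)"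
      by (rule sum.cong) (auto simp: unit_vec_def)
    then show ?thesis using aff[of "unit_vec k"] that by simp
  qed
  have "lin_part n f x = (\<Sum>k<n. B (x k) * a k)"
    unfolding lin_part_def by (rule sum.cong) (simp_all add: fe f0 add.assoc[symmetric])
  also have "\<dots> = f x + f zero_vec"
    by (simp only: aff[of x] f0 bit_add_cancel)
  finally show ?thesis .
qed

lemma lin_part_local:
  fixes g :: "(nat \<Rightarrow> bool) \<Rightarrow> bool"
  assumes S: "S \<subseteq> {..<n}" and local: "\<And>y. g (restr y S) = g y"
  shows "lin_part n (\<lambda>y. B (g y)) x = B (par {k\<in>S. g (unit_vec k) \<noteq> g zero_vec} x)"
    (is "_ = B (par ?T x)")
proof -
  have T: "?T \<subseteq> {..<n}" using S by auto
  have coeff: "B (g (unit_vec k)) + B (g zero_vec) = B (k \<in> ?T)" for k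
  proof (cases "k \<in> S")
    case True
    then have "(k \<in> ?T) = (g (unit_vec k) \<noteq> g zero_vec)" by simp
    then show ?thesis by (simp only: B_xor)
  next
    case False
    then have "restr (unit_vec k) S = restr zero_vec S"
      by (auto simp: restr_def unit_vec_def zero_vec_def)
    then have "g (unit_vec k) = g zero_vec"
      using local[of "unit_vec k"] local[of zero_vec] by simp
    then show ?thesis using False by simp
  qed
  have "lin_part n (\<lambda>y. B (g y)) x = (\<Sum>k<n. B (x k) * B (k \<in> ?T))"
    unfolding lin_part_def coeff ..
  also have "\<dots> = B (par ?T x)"
    by (simp only: B_par[OF finite_subset[OF T finite_lessThan]] sum_subset_as_linear_form[OF T])
  finally show ?thesis .
qed

lemma parity_of_linear_parts:
  fixes m m' :: "(nat \<Rightarrow> bool) \<Rightarrow> nat \<Rightarrow> bool"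
  assumes J: "finite J"
    and aff: "\<And>y. B (par J (m y)) = c + (\<Sum>k<n. B (y k) * a k)"
    and lin: "\<And>j. j \<in> J \<Longrightarrow> B (m' x j) = lin_part n (\<lambda>y. B (m y j)) x"
  shows "par J (m' x) = (par J (m x) \<noteq> par J (m zero_vec))"
proof -
  have "B (par J (m' x)) = (\<Sum>j\<in>J. lin_part n (\<lambda>y. B (m y j)) x)"
    by (simp add: B_par[OF J] lin)
  also have "\<dots> = lin_part n (\<lambda>y. B (par J (m y))) x"
    by (simp add: B_par[OF J] lin_part_sum)
  also have "\<dots> = B (par J (m x)) + B (par J (m zero_vec))"
    by (rule lin_part_affine[OF aff])
  finally show ?thesis by (simp only: B_xor[symmetric] B_inj)
qed

lemma mval_restr: "mval C (restr x (inM C j)) j = mval C x j"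
proof -
  have "restr (restr x (inM C j)) (inM C j) = restr x (inM C j)"
    by (auto simp: restr_def)
  then show ?thesis by (simp add: mval_def)
qed

definition mid_support :: "circuit \<Rightarrow> nat \<Rightarrow> nat set" where
  "mid_support C j = {k\<in>inM C j. mval C (unit_vec k) j \<noteq> mval C zero_vec j}"

lemma mid_support_subset: "mid_support C j \<subseteq> inM C j"
  by (auto simp: mid_support_def)

lemma par_mid_support:
  assumes "inM C j \<subseteq> {..<n}"
  shows "B (par (mid_support C j) x) = lin_part n (\<lambda>y. B (mval C y j)) x"
  unfolding mid_support_def by (rule lin_part_local[OF assms, of "\<lambda>y. mval C y j", OF mval_restr, symmetric])

lemma mid_parity_affine:
  assumes comp: "computes n A C" and i: "i < n"
    and T1: "T1 \<subseteq> inO C i" "inO C i \<subseteq> {..<n}" and T2: "T2 \<subseteq> midO C i"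
    and gate: "\<And>v w. gO C i (restr v (inO C i)) (restr w (midO C i)) = (c \<noteq> (par T1 v \<noteq> par T2 w))"
  shows "B (par T2 (mval C y)) = B c + (\<Sum>k<n. B (y k) * (B (k \<in> T1) + B (A i k)))"
proof -
  define S where "S = {k\<in>{..<n}. A i k}"
  have T1n: "T1 \<subseteq> {..<n}" and Sn: "S \<subseteq> {..<n}" using T1 by (auto simp: S_def)
  have "outval C y i = linop n A y i" using comp i by (simp add: computes_def)
  then have "(c \<noteq> (par T1 y \<noteq> par T2 (mval C y))) = par S y"
    by (simp add: outval_def gate linop_def S_def par_restr[OF T1(1)] par_restr[OF T2])
  then have "B (par T2 (mval C y)) = B c + (B (par T1 y) + B (par S y))"
    by (cases c; cases "par T1 y"; cases "par S y"; cases "par T2 (mval C y)") auto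
  also have "B (par T1 y) + B (par S y) = (\<Sum>k<n. B (y k) * (B (k \<in> T1) + B (k \<in> S)))"
    by (simp only: B_par[OF finite_subset[OF T1n finite_lessThan]] B_par[OF finite_subset[OF Sn finite_lessThan]]
        sum_subset_as_linear_form[OF T1n] sum_subset_as_linear_form[OF Sn] distrib_left sum.distrib)
  also have "\<dots> = (\<Sum>k<n. B (y k) * (B (k \<in> T1) + B (A i k)))"
    by (rule sum.cong) (auto simp: S_def)
  finally show ?thesis .
qed

text \<open>The linearized circuit: same wires, middle node j computes the parity of its linear part,
  and output i keeps its linear gate (sets T1 i, T2 i, constant c i) with the constant corrected by
  the value of the old middle parity at 0.\<close>
definition linearize ::
  "circuit \<Rightarrow> (nat \<Rightarrow> nat set) \<Rightarrow> (nat \<Rightarrow> nat set) \<Rightarrow> (nat \<Rightarrow> bool) \<Rightarrow> circuit" where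
  "linearize C T1 T2 c = C\<lparr>gM := (\<lambda>j v. par (mid_support C j) v),
     gO := (\<lambda>i v w. (c i \<noteq> par (T2 i) (mval C zero_vec)) \<noteq> (par (T1 i) v \<noteq> par (T2 i) w))\<rparr>"

lemma mval_linearize: "mval (linearize C T1 T2 c) x j = par (mid_support C j) x"
  by (simp add: linearize_def mval_def par_restr[OF mid_support_subset])

lemma linearize_wiring:
  "wf_circuit n (linearize C T1 T2 c) = wf_circuit n C"
  "wires n (linearize C T1 T2 c) = wires n C"
  by (simp_all add: linearize_def wf_circuit_def wires_def)

lemma linearize_linear_mid: "linear_mid (linearize C T1 T2 c) j"
  unfolding linear_mid_def
  by (intro exI[of _ "mid_support C j"] conjI exI[of _ False])
    (simp_all add: linearize_def mid_support_subset par_restr[OF mid_support_subset])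

lemma linearize_linear_out:
  assumes "T1 i \<subseteq> inO C i" "T2 i \<subseteq> midO C i"
  shows "linear_out (linearize C T1 T2 c) i"
  unfolding linear_out_def
  by (intro exI[of _ "T1 i"] conjI exI[of _ "T2 i"] exI[of _ "c i \<noteq> par (T2 i) (mval C zero_vec)"])
    (simp_all add: linearize_def assms par_restr[OF assms(1)] par_restr[OF assms(2)])

lemma computes_linearize:
  assumes wf: "wf_circuit n C" and comp: "computes n A C"
    and T1: "\<And>i. i < n \<Longrightarrow> T1 i \<subseteq> inO C i" and T2: "\<And>i. i < n \<Longrightarrow> T2 i \<subseteq> midO C i"
    and gate: "\<And>i v w. i < n \<Longrightarrow>
      gO C i (restr v (inO C i)) (restr w (midO C i)) = (c i \<noteq> (par (T1 i) v \<noteq> par (T2 i) w))"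
  shows "computes n A (linearize C T1 T2 c)"
  unfolding computes_def
proof (intro allI impI)
  fix x i assume i: "i < n"
  have wf_in: "inO C i \<subseteq> {..<n}" and wf_mid: "midO C i \<subseteq> {..<mid C}"
    and wf_inM: "\<And>j. j < mid C \<Longrightarrow> inM C j \<subseteq> {..<n}"
    using wf i by (auto simp: wf_circuit_def)
  have T2_mid: "T2 i \<subseteq> {..<mid C}" using T2[OF i] wf_mid by blast
  have mid_parity: "par (T2 i) (mval (linearize C T1 T2 c) x)
      = (par (T2 i) (mval C x) \<noteq> par (T2 i) (mval C zero_vec))"
  proof (rule parity_of_linear_parts)
    show "finite (T2 i)" using T2_mid finite_subset by blast
    show "B (par (T2 i) (mval C y)) = B (c i) + (\<Sum>k<n. B (y k) * (B (k \<in> T1 i) + B (A i k)))" for y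
      by (rule mid_parity_affine[OF comp i T1[OF i] wf_in T2[OF i] gate[OF i]])
    show "B (mval (linearize C T1 T2 c) x j) = lin_part n (\<lambda>y. B (mval C y j)) x" if "j \<in> T2 i" for j
    proof -
      have "j < mid C" using that T2_mid by blast
      then show ?thesis by (simp only: mval_linearize par_mid_support[OF wf_inM])
    qed
  qed
  have "outval C x i = linop n A x i" using comp i by (simp add: computes_def)
  then have old_output: "(c i \<noteq> (par (T1 i) x \<noteq> par (T2 i) (mval C x))) = linop n A x i"
    by (simp add: outval_def gate[OF i] par_restr[OF T1[OF i]] par_restr[OF T2[OF i]])
  have new_output: "outval (linearize C T1 T2 c) x i = ((c i \<noteq> par (T2 i) (mval C zero_vec))
      \<noteq> (par (T1 i) x \<noteq> par (T2 i) (mval (linearize C T1 T2 c) x)))"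
    by (simp add: outval_def linearize_def par_restr[OF T1[OF i]] par_restr[OF T2[OF i]])
  show "outval (linearize C T1 T2 c) x i = linop n A x i"
    using old_output new_output mid_parity by auto
qed

theorem theorem2:
  fixes n :: nat and A :: "nat \<Rightarrow> nat \<Rightarrow> bool" and \<Phi> :: circuit
  assumes "wf_circuit n \<Phi>"
    and "computes n A \<Phi>"
    and "\<forall>i<n. linear_out \<Phi> i"
  shows "\<exists>\<Phi>'. wf_circuit n \<Phi>' \<and> computes n A \<Phi>' \<and> wires n \<Phi>' \<le> wires n \<Phi> + 2 * n \<and>
           (\<forall>j<mid \<Phi>'. linear_mid \<Phi>' j) \<and> (\<forall>i<n. linear_out \<Phi>' i)"
proof -
  obtain T1 T2 c where gates: "\<And>i. i < n \<Longrightarrow> T1 i \<subseteq> inO \<Phi> i \<and> T2 i \<subseteq> midO \<Phi> i \<and>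
      (\<forall>v w. gO \<Phi> i (restr v (inO \<Phi> i)) (restr w (midO \<Phi> i)) = (c i \<noteq> (par (T1 i) v \<noteq> par (T2 i) w)))"
    using assms(3) unfolding linear_out_def by metis
  let ?\<Phi>' = "linearize \<Phi> T1 T2 c"
  have "computes n A ?\<Phi>'"
    using gates by (intro computes_linearize[OF assms(1,2)]) blast+
  moreover have "\<forall>i<n. linear_out ?\<Phi>' i"
    using gates by (blast intro: linearize_linear_out)
  ultimately show ?thesis
    using assms(1) by (intro exI[of _ ?\<Phi>']) (simp add: linearize_wiring linearize_linear_mid)
qed

end
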